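(* For any valid scheme (satisfying (C1)–(C8)) with $N\ge1$, $K\ge2$, and any $k\in\{2,\dots,K\}$, letting $\mathcal{R}_U'$ be the user-side common randomness provided by the user privacy constraint (C6) for the message indices $k-1$ and $k$, \[ I\big(W_{k:K};Q_{1:N}^{[k-1,\mathcal{R}_U]},A_{1:N}^{[k-1,\mathcal{R}_U]},\mathcal{R}_S\,\big|\,W_{1:k-1}\big)\ \ge\ \frac1N\, I\big(W_{k+1:K};Q_{1:N}^{[k,\mathcal{R}_U']},A_{1:N}^{[k,\mathcal{R}_U']},\mathcal{R}_S\,\big|\,W_{1:k}\big)+\frac{L}{N}, \] where $W_{K+1:K}$ is empty (so the mutual information term is $0$ when $k=K$).
   Context: Model (SPIR with user-side common randomness). There are $N\ge1$ non-colluding databases, each storing the same $K\ge2$ messages $W_1,\dots,W_K$. Each message consists of $L$ i.i.d. symbols uniform over a sufficiently large finite field $\mathbb{F}_q$; entropies are in $q$-ary units, so $H(W_k)=L$ and $H(W_{1:K})=KL$. The databases share server-side common randomness $\mathcal{R}_S$, unknown to the user. The user holds user-side common randomness $\mathcal{R}_U$, a subset of the components of $\mathcal{R}_S$, unknown to the databases except for its size (uniform over subsets of given cardinality). $\mathcal{F}$ is the user's retrieval-strategy randomness. To retrieve $W_k$ the user sends $Q_n^{[k,\mathcal{R}_U]}$ to database $n$, receiving $A_n^{[k,\mathcal{R}_U]}$; $W_{\bar k}=\{W_j:j\ne k\}$. A valid scheme satisfies for all $k,n,\mathcal{R}_U$: (C1) $I(W_{1:K};k,\mathcal{F},\mathcal{R}_S,\mathcal{R}_U)=0$;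 (C2) $I(Q_{1:N}^{[k,\mathcal{R}_U]};W_{1:K},\mathcal{R}_S\setminus\mathcal{R}_U)=0$; (C3) $H(Q_{1:N}^{[k,\mathcal{R}_U]}\mid\mathcal{F})=0$; (C4) $H(A_n^{[k,\mathcal{R}_U]}\mid Q_n^{[k,\mathcal{R}_U]},W_{1:K},\mathcal{R}_S)=0$; (C5) $H(W_k\mid\mathcal{F},A_{1:N}^{[k,\mathcal{R}_U]},\mathcal{R}_U)=0$; (C6) user privacy: for all $k,k',n,\mathcal{R}_U$ there is $\mathcal{R}_U'$ with $H(\mathcal{R}_U')=H(\mathcal{R}_U)$ and $(Q_n^{[k,\mathcal{R}_U]},A_n^{[k,\mathcal{R}_U]},W_{1:K},\mathcal{R}_S)\sim(Q_n^{[k',\mathcal{R}_U']},A_n^{[k',\mathcal{R}_U']},W_{1:K},\mathcal{R}_S)$; (C7) $I(W_{\bar k};\mathcal{F},A_{1:N}^{[k,\mathcal{R}_U]},\mathcal{R}_U)=0$; (C8) $I(\mathcal{R}_S\setminus\mathcal{R}_U;\mathcal{F},A_{1:N}^{[k,\mathcal{R}_U]},W_k,\mathcal{R}_U)=0$. *)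

theory Defs
  imports "HOL-Probability.Probability"
begin

text \<open>These are literally the library notions
  (the locale abbreviations written out outside the locale).\<close>

definition ent :: "'a measure \<Rightarrow> real \<Rightarrow> ('a \<Rightarrow> 'x) \<Rightarrow> real" where
  "ent M b X = prob_space.entropy M b (count_space (X ` space M)) X"

definition cent :: "'a measure \<Rightarrow> real \<Rightarrow> ('a \<Rightarrow> 'x) \<Rightarrow> ('a \<Rightarrow> 'y) \<Rightarrow> real" where
  "cent M b X Y = prob_space.conditional_entropy M b
     (count_space (X ` space M)) (count_space (Y ` space M)) X Y"

definition mi :: "'a measure \<Rightarrow> real \<Rightarrow> ('a \<Rightarrow> 'x) \<Rightarrow> ('a \<Rightarrow> 'y) \<Rightarrow> real" where
  "mi M b X Y = prob_space.mutual_information M b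
     (count_space (X ` space M)) (count_space (Y ` space M)) X Y"

definition cmi :: "'a measure \<Rightarrow> real \<Rightarrow> ('a \<Rightarrow> 'x) \<Rightarrow> ('a \<Rightarrow> 'y) \<Rightarrow> ('a \<Rightarrow> 'z) \<Rightarrow> real" where
  "cmi M b X Y Z = prob_space.conditional_mutual_information M b
     (count_space (X ` space M)) (count_space (Y ` space M)) (count_space (Z ` space M)) X Y Z"

definition same_distr :: "'a measure \<Rightarrow> ('a \<Rightarrow> 'x) \<Rightarrow> ('a \<Rightarrow> 'x) \<Rightarrow> bool" where
  "same_distr M X Y \<longleftrightarrow>
     (\<forall>x. measure M {\<omega> \<in> space M. X \<omega> = x} = measure M {\<omega> \<in> space M. Y \<omega> = x})"

text \<open>Messages: W j is the j-th message (a list of L symbols of the field 'f), j = 1..K.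
  Wseg W a c = W_{a:c} (empty list if a > c).\<close>
definition Wseg :: "(nat \<Rightarrow> 'a \<Rightarrow> 'f list) \<Rightarrow> nat \<Rightarrow> nat \<Rightarrow> 'a \<Rightarrow> 'f list list" where
  "Wseg W a c \<omega> = map (\<lambda>j. W j \<omega>) [a..<Suc c]"

definition Wbar :: "(nat \<Rightarrow> 'a \<Rightarrow> 'f list) \<Rightarrow> nat \<Rightarrow> nat \<Rightarrow> 'a \<Rightarrow> 'f list list" where
  "Wbar W K k \<omega> = map (\<lambda>j. W j \<omega>) (filter (\<lambda>j. j \<noteq> k) [1..<Suc K])"

text \<open>Server-side common randomness R_S: a family of components RS c, c in the finite set C.
  The components with indices in a set U (e.g. U itself for R_U, C - U for R_S minus R_U).\<close>
definition Rpart :: "('c \<Rightarrow> 'a \<Rightarrow> 'r) \<Rightarrow> 'c set \<Rightarrow> 'a \<Rightarrow> ('c \<Rightarrow> 'r)" where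
  "Rpart RS U \<omega> = restrict (\<lambda>c. RS c \<omega>) U"

definition allN :: "(nat \<Rightarrow> nat \<Rightarrow> 'c set \<Rightarrow> 'a \<Rightarrow> 'x) \<Rightarrow> nat \<Rightarrow> nat \<Rightarrow> 'c set \<Rightarrow> 'a \<Rightarrow> 'x list" where
  "allN Z N k U \<omega> = map (\<lambda>n. Z n k U \<omega>) [1..<Suc N]"

definition adm :: "'c set \<Rightarrow> nat \<Rightarrow> 'c set set" where
  "adm C m = {U. U \<subseteq> C \<and> card U = m}"

text \<open>Q n k U, A n k U are the query to / answer of
  database n when retrieving W_k with user-side randomness R_U given by the components in U;
  F is the retrieval-strategy randomness.\<close>
definition valid_scheme ::
  "'a measure \<Rightarrow> nat \<Rightarrow> nat \<Rightarrow> nat \<Rightarrow> 'c set \<Rightarrow> nat \<Rightarrow>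
   (nat \<Rightarrow> 'a \<Rightarrow> 'f::{field,finite} list) \<Rightarrow> ('c \<Rightarrow> 'a \<Rightarrow> 'r) \<Rightarrow> ('a \<Rightarrow> 'g) \<Rightarrow>
   (nat \<Rightarrow> nat \<Rightarrow> 'c set \<Rightarrow> 'a \<Rightarrow> 'q) \<Rightarrow> (nat \<Rightarrow> nat \<Rightarrow> 'c set \<Rightarrow> 'a \<Rightarrow> 'ans) \<Rightarrow> bool" where
  "valid_scheme M N K L C m W RS F Q A \<longleftrightarrow>
   (let b = real CARD('f) in
    prob_space M \<and> finite C \<and> m \<le> card C \<and>
    \<comment> \<open>all random variables are discrete (finite-valued)\<close>
    (\<forall>j. simple_function M (W j)) \<and> (\<forall>c. simple_function M (RS c)) \<and> simple_function M F \<and>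
    (\<forall>n k U. simple_function M (Q n k U)) \<and> (\<forall>n k U. simple_function M (A n k U)) \<and>
    \<comment> \<open>messages: K*L i.i.d. uniform symbols over the field\<close>
    (\<forall>ws. length ws = K \<and> (\<forall>w\<in>set ws. length w = L) \<longrightarrow>
        measure M {\<omega> \<in> space M. Wseg W 1 K \<omega> = ws} = 1 / b ^ (K * L)) \<and>
    (\<forall>k\<in>{1..K}. \<forall>U\<in>adm C m.
       \<comment> \<open>(C1)\<close>
       mi M b (Wseg W 1 K) (\<lambda>\<omega>. (F \<omega>, Rpart RS C \<omega>, Rpart RS U \<omega>)) = 0 \<and>
       \<comment> \<open>(C2)\<close>
       mi M b (allN Q N k U) (\<lambda>\<omega>. (Wseg W 1 K \<omega>, Rpart RS (C - U) \<omega>)) = 0 \<and>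
       \<comment> \<open>(C3)\<close>
       cent M b (allN Q N k U) F = 0 \<and>
       \<comment> \<open>(C4)\<close>
       (\<forall>n\<in>{1..N}. cent M b (A n k U) (\<lambda>\<omega>. (Q n k U \<omega>, Wseg W 1 K \<omega>, Rpart RS C \<omega>)) = 0) \<and>
       \<comment> \<open>(C5)\<close>
       cent M b (W k) (\<lambda>\<omega>. (F \<omega>, allN A N k U \<omega>, Rpart RS U \<omega>)) = 0 \<and>
       \<comment> \<open>(C6)\<close>
       (\<forall>k'\<in>{1..K}. \<forall>n\<in>{1..N}. \<exists>U'\<in>adm C m.
          ent M b (Rpart RS U') = ent M b (Rpart RS U) \<and>
          same_distr M (\<lambda>\<omega>. (Q n k U \<omega>, A n k U \<omega>, Wseg W 1 K \<omega>, Rpart RS C \<omega>))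
                       (\<lambda>\<omega>. (Q n k' U' \<omega>, A n k' U' \<omega>, Wseg W 1 K \<omega>, Rpart RS C \<omega>))) \<and>
       \<comment> \<open>(C7)\<close>
       mi M b (Wbar W K k) (\<lambda>\<omega>. (F \<omega>, allN A N k U \<omega>, Rpart RS U \<omega>)) = 0 \<and>
       \<comment> \<open>(C8)\<close>
       mi M b (Rpart RS (C - U)) (\<lambda>\<omega>. (F \<omega>, allN A N k U \<omega>, W k \<omega>, Rpart RS U \<omega>)) = 0))"

end

theory Submission
  imports Defs
begin

(* Write q for the field size, P = W_{1:k-1}, T = W_{k:K} and R = R_S, and let Q, A be the
   queries and answers of all databases when W_k is retrieved with the user-side randomness U'.
   The messages are independent of the strategy F and of R, and Q is a function of F; hence,
   given (A, Q, R), the strategy carries no further information about the messages, and W_k,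
   which the user decodes from (F, A, R_U'), is already determined by (A, Q, R). As W_k brings
   L fresh q-ary symbols, I(W_{k+1:K}; Q, A, R | W_{1:k}) + L <= H(A | Q, R, P).
   The answers split over the databases, and each answer A_n is a function of its query, R and
   all messages, while P is independent of (Q_n, R); this gives
   H(A | Q, R, P) <= sum_n I(T; Q_n, A_n, R | P). Finally, by user privacy the query and answer
   of database n for (k, U') are distributed, jointly with the messages and R, like those for
   (k-1, U), which are part of the full transcript for k-1. *)

section \<open>Functional dependence\<close>

(* Y is a function of X on the sample space; cent M b Y X = 0 is the almost-sure counterpart. *)
definition determines :: "'a measure \<Rightarrow> ('a \<Rightarrow> 'x) \<Rightarrow> ('a \<Rightarrow> 'y) \<Rightarrow> bool" where
  "determines M X Y \<longleftrightarrow> (\<forall>\<omega>\<in>space M. \<forall>\<omega>'\<in>space M. X \<omega> = X \<omega>' \<longrightarrow> Y \<omega> = Y \<omega>')"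

lemma determinesE:
  assumes "determines M X Y"
  obtains f where "\<And>\<omega>. \<omega> \<in> space M \<Longrightarrow> Y \<omega> = f (X \<omega>)"
proof -
  have "Y \<omega> = Y (SOME \<omega>'. \<omega>' \<in> space M \<and> X \<omega>' = X \<omega>)" if "\<omega> \<in> space M" for \<omega>
  proof -
    have "\<exists>\<omega>'. \<omega>' \<in> space M \<and> X \<omega>' = X \<omega>" using that by blast
    then have "(SOME \<omega>'. \<omega>' \<in> space M \<and> X \<omega>' = X \<omega>) \<in> space M
        \<and> X (SOME \<omega>'. \<omega>' \<in> space M \<and> X \<omega>' = X \<omega>) = X \<omega>"
      by (rule someI_ex)
    then show ?thesis using assms that unfolding determines_def by metis
  qed
  then show thesis
    using that[of "\<lambda>v. Y (SOME \<omega>'. \<omega>' \<in> space M \<and> X \<omega>' = v)"] by blast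
qed

lemma determinesD:
  "determines M X Y \<Longrightarrow> \<omega> \<in> space M \<Longrightarrow> \<omega>' \<in> space M \<Longrightarrow> X \<omega> = X \<omega>' \<Longrightarrow> Y \<omega> = Y \<omega>'"
  unfolding determines_def by blast

lemma simple_function_determines:
  assumes "simple_function M X" "determines M X Y"
  shows "simple_function M Y"
proof -
  obtain f where "\<And>\<omega>. \<omega> \<in> space M \<Longrightarrow> Y \<omega> = f (X \<omega>)"
    using determinesE[OF assms(2)] by blast
  then show ?thesis
    using simple_function_compose1[OF assms(1), of f] by (simp cong: simple_function_cong)
qed

section \<open>Lists of messages, queries and answers\<close>

lemma simple_function_map:
  assumes "\<And>n. simple_function M (X n)"
  shows "simple_function M (\<lambda>\<omega>. map (\<lambda>n. X n \<omega>) ns)"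
proof (induction ns)
  case (Cons n ns)
  then show ?case
    using simple_function_compose2[OF assms[of n] Cons.IH, of "(#)"] by simp
qed simp

lemma simple_function_Wseg:
  "(\<And>j. simple_function M (W j)) \<Longrightarrow> simple_function M (Wseg W a c)"
  unfolding Wseg_def[abs_def] by (rule simple_function_map)

lemma simple_function_allN:
  "(\<And>n. simple_function M (Z n k U)) \<Longrightarrow> simple_function M (allN Z N k U)"
  unfolding allN_def[abs_def] by (rule simple_function_map)

lemma allN_eq_map: "allN Z N k U = (\<lambda>\<omega>. map (\<lambda>n. Z n k U \<omega>) [1..<Suc N])"
  by (simp add: allN_def fun_eq_iff)

lemma nth_allN:
  assumes "n \<in> {1..N}"
  shows "allN Z N k U \<omega> ! (n - 1) = Z n k U \<omega>"
proof -
  have "n - 1 < Suc N - 1" "1 + (n - 1) = n" using assms by auto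
  then show ?thesis by (simp add: allN_def nth_map_upt del: upt_Suc)
qed

lemma simple_function_Rpart:
  assumes "finite U" and "\<And>c. simple_function M (RS c)"
  shows "simple_function M (Rpart RS U)"
  using assms(1)
proof (induction U rule: finite_induct)
  case empty
  have "Rpart RS {} = (\<lambda>\<omega>. (\<lambda>_. undefined))"
    by (simp add: Rpart_def fun_eq_iff)
  then show ?case by simp
next
  case (insert c U)
  have eq: "Rpart RS (insert c U) = (\<lambda>(g, r). g(c := r)) \<circ> (\<lambda>\<omega>. (Rpart RS U \<omega>, RS c \<omega>))"
    by (auto simp: Rpart_def fun_eq_iff)
  show ?case unfolding eq
    by (intro simple_function_compose simple_function_Pair insert.IH assms(2))
qed

lemma Rpart_subset: "U \<subseteq> C \<Longrightarrow> Rpart RS U \<omega> = restrict (Rpart RS C \<omega>) U"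
  by (auto simp: Rpart_def restrict_def fun_eq_iff)

lemma length_Wseg [simp]: "length (Wseg W a c \<omega>) = Suc c - a"
  by (simp add: Wseg_def del: upt_Suc)

lemma Wseg_append:
  assumes "1 \<le> a" "a \<le> j" "j \<le> Suc c"
  shows "Wseg W a c \<omega> = Wseg W a (j - 1) \<omega> @ Wseg W j c \<omega>"
proof -
  have "[a..<Suc c] = [a..<j] @ [j..<Suc c]"
    using assms upt_add_eq_append[of a j "Suc c - j"] by simp
  moreover have "Suc (j - 1) = j" using assms by simp
  ultimately show ?thesis by (simp add: Wseg_def del: upt_Suc)
qed

lemma Wseg_Cons: "a \<le> c \<Longrightarrow> Wseg W a c \<omega> = W a \<omega> # Wseg W (Suc a) c \<omega>"
  by (simp add: Wseg_def upt_conv_Cons del: upt_Suc)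

lemma nth_Wseg:
  assumes "a \<le> j" "j \<le> c"
  shows "Wseg W a c \<omega> ! (j - a) = W j \<omega>"
proof -
  have "j - a < Suc c - a" "a + (j - a) = j" using assms by auto
  then show ?thesis by (simp add: Wseg_def nth_map_upt del: upt_Suc)
qed

definition message_lists :: "nat \<Rightarrow> nat \<Rightarrow> 'f list list set" where
  "message_lists L j = {ws. length ws = j \<and> (\<forall>w\<in>set ws. length w = L)}"

lemma message_lists_eq: "message_lists L j = {ws. set ws \<subseteq> {w. length w = L} \<and> length ws = j}"
  unfolding message_lists_def by auto

lemma finite_message_lists: "finite (message_lists L j :: 'f::finite list list set)"
  unfolding message_lists_eq
  by (rule finite_lists_length_eq) (use finite_lists_length_eq[of "UNIV :: 'f set" L] in simp)

lemma card_message_lists: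
  "card (message_lists L j :: 'f::finite list list set) = CARD('f) ^ (L * j)"
proof -
  have "finite {w :: 'f list. length w = L}" "card {w :: 'f list. length w = L} = CARD('f) ^ L"
    using finite_lists_length_eq[of "UNIV :: 'f set" L] card_lists_length_eq[of "UNIV :: 'f set" L]
    by simp_all
  then show ?thesis unfolding message_lists_eq by (simp add: card_lists_length_eq power_mult)
qed

lemma message_lists_ne: "message_lists L j \<noteq> {}"
proof -
  have "replicate j (replicate L undefined) \<in> message_lists L j" by (simp add: message_lists_def)
  then show ?thesis by blast
qed

lemma Wseg_in_message_lists:
  assumes "Wseg W 1 K \<omega> \<in> message_lists L K" "1 \<le> a" "c \<le> K"
  shows "Wseg W a c \<omega> \<in> message_lists L (Suc c - a)"
proof -
  have "length (W j \<omega>) = L" if "j \<in> {1..K}" for j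
  proof -
    have "W j \<omega> \<in> set (Wseg W 1 K \<omega>)" using that by (simp add: Wseg_def del: upt_Suc)
    then show ?thesis using assms(1) by (simp add: message_lists_def)
  qed
  then show ?thesis using assms(2,3) by (auto simp: message_lists_def Wseg_def del: upt_Suc)
qed

section \<open>Entropy calculus for simple random variables\<close>

lemma mult_log_quotient:
  fixes p x y z :: real
  assumes "0 \<le> p" "p \<le> x" "p \<le> y" "p \<le> z"
  shows "p * log B (p / (x * (y / z))) = p * log B p - p * log B x - p * log B y + p * log B z"
proof (cases "p = 0")
  case False
  with assms have "0 < p" "0 < x" "0 < y" "0 < z" by auto
  then show ?thesis by (simp add: log_divide_pos log_mult_pos algebra_simps)
qed simp

context information_space
begin

lemma ent_cong:
  assumes "\<And>\<omega>. \<omega> \<in> space M \<Longrightarrow> X \<omega> = Y \<omega>"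
  shows "ent M b X = ent M b Y"
proof -
  have img: "X ` space M = Y ` space M"
    using assms by (auto intro: image_cong)
  have "distr M (count_space (X ` space M)) X = distr M (count_space (Y ` space M)) Y"
    unfolding img by (rule distr_cong) (auto simp: assms)
  then show ?thesis unfolding ent_def entropy_def img by simp
qed

lemma ent_le_determines:
  assumes X: "simple_function M X" and det: "determines M X Y"
  shows "ent M b Y \<le> ent M b X"
proof -
  obtain f where f: "\<And>\<omega>. \<omega> \<in> space M \<Longrightarrow> Y \<omega> = f (X \<omega>)"
    using determinesE[OF det] by blast
  have "ent M b Y = ent M b (f \<circ> X)"
    using f by (intro ent_cong) auto
  also have "\<dots> \<le> ent M b X"
    unfolding ent_def using entropy_data_processing[OF X] by simp
  finally show ?thesis .
qed

lemma ent_eq_determines: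
  assumes "simple_function M X" "simple_function M Y" "determines M X Y" "determines M Y X"
  shows "ent M b X = ent M b Y"
  using ent_le_determines[OF assms(1,3)] ent_le_determines[OF assms(2,4)] by simp

lemma ent_commute:
  assumes "simple_function M X" "simple_function M Y"
  shows "ent M b (\<lambda>\<omega>. (X \<omega>, Y \<omega>)) = ent M b (\<lambda>\<omega>. (Y \<omega>, X \<omega>))"
  by (rule ent_eq_determines) (use assms in \<open>auto simp: determines_def\<close>)

lemma cent_eq_ent:
  assumes X: "simple_function M X" and Y: "simple_function M Y"
  shows "cent M b X Y = ent M b (\<lambda>\<omega>. (X \<omega>, Y \<omega>)) - ent M b Y"
  using entropy_chain_rule[OF Y X] ent_commute[OF X Y] unfolding cent_def ent_def by simp

lemma mi_eq_ent:
  assumes X: "simple_function M X" and Y: "simple_function M Y"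
  shows "mi M b X Y = ent M b X + ent M b Y - ent M b (\<lambda>\<omega>. (X \<omega>, Y \<omega>))"
  using mutual_information_eq_entropy_conditional_entropy[OF X Y] cent_eq_ent[OF X Y]
  unfolding mi_def cent_def ent_def by simp

lemma cent_nonneg: "simple_function M X \<Longrightarrow> simple_function M Y \<Longrightarrow> 0 \<le> cent M b X Y"
  unfolding cent_def by (rule conditional_entropy_nonneg)

lemma cmi_nonneg:
  "simple_function M X \<Longrightarrow> simple_function M Y \<Longrightarrow> simple_function M Z \<Longrightarrow> 0 \<le> cmi M b X Y Z"
  unfolding cmi_def by (rule conditional_mutual_information_nonneg)

lemma ent_eq_sum:
  assumes V: "simple_function M V"
  shows "ent M b V =
    - (\<Sum>v\<in>V`space M. prob (V -` {v} \<inter> space M) * log b (prob (V -` {v} \<inter> space M)))"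
  unfolding ent_def
  by (rule entropy_simple_distributed[OF simple_distributedI[OF V measure_nonneg refl]])

lemma ent_eq_sum_superset:
  assumes V: "simple_function M V" and T: "finite T"
    and null: "\<And>v. v \<in> V`space M \<Longrightarrow> v \<notin> T \<Longrightarrow> prob (V -` {v} \<inter> space M) = 0"
  shows "ent M b V =
    - (\<Sum>v\<in>T. prob (V -` {v} \<inter> space M) * log b (prob (V -` {v} \<inter> space M)))"
proof -
  let ?h = "\<lambda>v. prob (V -` {v} \<inter> space M) * log b (prob (V -` {v} \<inter> space M))"
  have fin: "finite (V`space M)" using simple_functionD(1)[OF V] .
  have empty: "V -` {v} \<inter> space M = {}" if "v \<notin> V`space M" for v
    using that by auto
  have "(\<Sum>v\<in>V`space M. ?h v) = (\<Sum>v\<in>V`space M \<union> T. ?h v)"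
    by (rule sum.mono_neutral_left) (use fin T empty in auto)
  also have "\<dots> = (\<Sum>v\<in>T. ?h v)"
    by (rule sum.mono_neutral_right) (use fin T null in auto)
  finally show ?thesis using ent_eq_sum[OF V] by simp
qed

lemma prob_vimage_comp:
  assumes V: "simple_function M V" and S: "finite S" "V`space M \<subseteq> S"
  shows "prob ((\<lambda>\<omega>. f (V \<omega>)) -` {u} \<inter> space M) =
    (\<Sum>v\<in>{v\<in>S. f v = u}. prob (V -` {v} \<inter> space M))"
proof -
  have "(\<lambda>\<omega>. f (V \<omega>)) -` {u} \<inter> space M = (\<Union>v\<in>{v\<in>S. f v = u}. V -` {v} \<inter> space M)"
    using S(2) by auto
  also have "prob \<dots> = (\<Sum>v\<in>{v\<in>S. f v = u}. prob (V -` {v} \<inter> space M))"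
    by (rule measure_finite_Union)
      (use S simple_functionD(2)[OF V] in \<open>auto simp: disjoint_family_on_def\<close>)
  finally show ?thesis .
qed

lemma sum_prob_log_prob_comp:
  assumes V: "simple_function M V"
  shows "(\<Sum>v\<in>V`space M. prob (V -` {v} \<inter> space M) * log b (prob ((\<lambda>\<omega>. f (V \<omega>)) -` {f v} \<inter> space M)))
    = - ent M b (\<lambda>\<omega>. f (V \<omega>))"
proof -
  let ?fV = "\<lambda>\<omega>. f (V \<omega>)"
  have fin: "finite (V`space M)" using simple_functionD(1)[OF V] .
  have fV: "simple_function M ?fV" using simple_function_compose1[OF V] .
  have img: "?fV`space M = f`V`space M" by auto
  have "(\<Sum>v\<in>V`space M. prob (V -` {v} \<inter> space M) * log b (prob (?fV -` {f v} \<inter> space M)))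
      = (\<Sum>u\<in>?fV`space M. \<Sum>v\<in>{v\<in>V`space M. f v = u}.
           prob (V -` {v} \<inter> space M) * log b (prob (?fV -` {f v} \<inter> space M)))"
    by (rule sum.group[symmetric]) (use fin in \<open>auto simp: img\<close>)
  also have "\<dots> = (\<Sum>u\<in>?fV`space M. prob (?fV -` {u} \<inter> space M) * log b (prob (?fV -` {u} \<inter> space M)))"
    by (auto simp: prob_vimage_comp[OF V fin] sum_distrib_right intro!: sum.cong)
  also have "\<dots> = - ent M b ?fV"
    using ent_eq_sum[OF fV] by simp
  finally show ?thesis .
qed

lemma cmi_eq_ent:
  assumes X: "simple_function M X" and Y: "simple_function M Y" and Z: "simple_function M Z"
  shows "cmi M b X Y Z = ent M b (\<lambda>\<omega>. (X \<omega>, Z \<omega>)) + ent M b (\<lambda>\<omega>. (Y \<omega>, Z \<omega>))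
    - ent M b (\<lambda>\<omega>. (X \<omega>, Y \<omega>, Z \<omega>)) - ent M b Z"
proof -
  let ?V = "\<lambda>\<omega>. (X \<omega>, Y \<omega>, Z \<omega>)"
  have V: "simple_function M ?V" using X Y Z by simp
  define p where "p t = prob (?V -` {t} \<inter> space M)" for t
  define pxz where "pxz t = prob ((\<lambda>\<omega>. (X \<omega>, Z \<omega>)) -` {t} \<inter> space M)" for t
  define pyz where "pyz t = prob ((\<lambda>\<omega>. (Y \<omega>, Z \<omega>)) -` {t} \<inter> space M)" for t
  define pz where "pz t = prob (Z -` {t} \<inter> space M)" for t
  note sd = simple_distributedI[OF _ measure_nonneg refl]
  have le_marginal: "p (x, y, z) \<le> pxz (x, z)" "p (x, y, z) \<le> pyz (y, z)" "p (x, y, z) \<le> pz z"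
    for x y z
    unfolding p_def pxz_def pyz_def pz_def
    by (auto intro!: finite_measure_mono simple_functionD(2) X Y Z)
  have split_log: "p (x, y, z) * log b (p (x, y, z) / (pxz (x, z) * (pyz (y, z) / pz z)))
      = p (x, y, z) * log b (p (x, y, z)) - p (x, y, z) * log b (pxz (x, z))
        - p (x, y, z) * log b (pyz (y, z)) + p (x, y, z) * log b (pz z)" for x y z
    by (intro mult_log_quotient le_marginal) (simp add: p_def)
  have "cmi M b X Y Z =
      (\<Sum>(x, y, z)\<in>?V`space M. p (x, y, z) * log b (p (x, y, z) / (pxz (x, z) * (pyz (y, z) / pz z))))"
    unfolding cmi_def p_def pxz_def pyz_def pz_def
    by (rule conditional_mutual_information_eq[OF sd[OF Z] sd[OF simple_function_Pair[OF Y Z]]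
          sd[OF simple_function_Pair[OF X Z]] sd[OF V]])
  also have "\<dots> = (\<Sum>t\<in>?V`space M. p t * log b (p t)
      - p t * log b (pxz ((\<lambda>(x, y, z). (x, z)) t)) - p t * log b (pyz ((\<lambda>(x, y, z). (y, z)) t))
      + p t * log b (pz ((\<lambda>(x, y, z). z) t)))"
    by (rule sum.cong[OF refl]) (simp only: split_paired_all prod.case split_log)
  also have "\<dots> = (\<Sum>t\<in>?V`space M. p t * log b (p t))
      - (\<Sum>t\<in>?V`space M. p t * log b (pxz ((\<lambda>(x, y, z). (x, z)) t)))
      - (\<Sum>t\<in>?V`space M. p t * log b (pyz ((\<lambda>(x, y, z). (y, z)) t)))
      + (\<Sum>t\<in>?V`space M. p t * log b (pz ((\<lambda>(x, y, z). z) t)))"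
    by (simp only: sum.distrib sum_subtractf)
  also have "(\<Sum>t\<in>?V`space M. p t * log b (pxz ((\<lambda>(x, y, z). (x, z)) t))) = - ent M b (\<lambda>\<omega>. (X \<omega>, Z \<omega>))"
    using sum_prob_log_prob_comp[OF V, of "\<lambda>(x, y, z). (x, z)"] unfolding p_def pxz_def by simp
  also have "(\<Sum>t\<in>?V`space M. p t * log b (pyz ((\<lambda>(x, y, z). (y, z)) t))) = - ent M b (\<lambda>\<omega>. (Y \<omega>, Z \<omega>))"
    using sum_prob_log_prob_comp[OF V, of "\<lambda>(x, y, z). (y, z)"] unfolding p_def pyz_def by simp
  also have "(\<Sum>t\<in>?V`space M. p t * log b (pz ((\<lambda>(x, y, z). z) t))) = - ent M b Z"
    using sum_prob_log_prob_comp[OF V, of "\<lambda>(x, y, z). z"] unfolding p_def pz_def by simp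
  also have "(\<Sum>t\<in>?V`space M. p t * log b (p t)) = - ent M b ?V"
    using ent_eq_sum[OF V] unfolding p_def by simp
  finally show ?thesis by simp
qed

lemma ent_submodular:
  assumes X: "simple_function M X" and Y: "simple_function M Y" and Z: "simple_function M Z"
  shows "ent M b (\<lambda>\<omega>. (X \<omega>, Y \<omega>, Z \<omega>)) + ent M b Z
    \<le> ent M b (\<lambda>\<omega>. (X \<omega>, Z \<omega>)) + ent M b (\<lambda>\<omega>. (Y \<omega>, Z \<omega>))"
  using cmi_nonneg[OF X Y Z] cmi_eq_ent[OF X Y Z] by simp

lemma ent_subadditive:
  assumes X: "simple_function M X" and Y: "simple_function M Y"
  shows "ent M b (\<lambda>\<omega>. (X \<omega>, Y \<omega>)) \<le> ent M b X + ent M b Y"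
  using mutual_information_nonneg_simple[OF X Y] mi_eq_ent[OF X Y] unfolding mi_def by simp

lemma mi_commute:
  assumes "simple_function M X" "simple_function M Y"
  shows "mi M b X Y = mi M b Y X"
  using mi_eq_ent[OF assms] mi_eq_ent[OF assms(2,1)] ent_commute[OF assms] by simp

lemma cent_le_determines:
  assumes X: "simple_function M X" and Y: "simple_function M Y" and det: "determines M Y Y'"
  shows "cent M b X Y \<le> cent M b X Y'"
proof -
  have Y': "simple_function M Y'" using simple_function_determines[OF Y det] .
  have "ent M b (\<lambda>\<omega>. (X \<omega>, Y \<omega>, Y' \<omega>)) + ent M b Y'
      \<le> ent M b (\<lambda>\<omega>. (X \<omega>, Y' \<omega>)) + ent M b (\<lambda>\<omega>. (Y \<omega>, Y' \<omega>))"
    by (rule ent_submodular[OF X Y Y'])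
  moreover have "ent M b (\<lambda>\<omega>. (X \<omega>, Y \<omega>, Y' \<omega>)) = ent M b (\<lambda>\<omega>. (X \<omega>, Y \<omega>))"
    by (rule ent_eq_determines) (use X Y Y' in \<open>auto simp: determines_def intro: determinesD[OF det]\<close>)
  moreover have "ent M b (\<lambda>\<omega>. (Y \<omega>, Y' \<omega>)) = ent M b Y"
    by (rule ent_eq_determines) (use Y Y' in \<open>auto simp: determines_def intro: determinesD[OF det]\<close>)
  ultimately show ?thesis
    using cent_eq_ent[OF X Y] cent_eq_ent[OF X Y'] by simp
qed

lemma cent_eq_0_determines:
  assumes "simple_function M Y" "determines M Y X"
  shows "cent M b X Y = 0"
proof -
  have X: "simple_function M X" using simple_function_determines[OF assms] .
  have "ent M b (\<lambda>\<omega>. (X \<omega>, Y \<omega>)) = ent M b Y"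
    by (rule ent_eq_determines) (use X assms(1) in \<open>auto simp: determines_def intro: determinesD[OF assms(2)]\<close>)
  then show ?thesis using cent_eq_ent[OF X assms(1)] by simp
qed

lemma cent_eq_0_mono:
  assumes "simple_function M X" "simple_function M Y" "determines M Y Y'" "cent M b X Y' = 0"
  shows "cent M b X Y = 0"
  using cent_le_determines[OF assms(1-3)] cent_nonneg[OF assms(1,2)] assms(4) by simp

lemma cent_Pair_le:
  assumes X: "simple_function M X" and Y: "simple_function M Y" and Z: "simple_function M Z"
  shows "cent M b (\<lambda>\<omega>. (X \<omega>, Y \<omega>)) Z \<le> cent M b X Z + cent M b Y Z"
proof -
  have "ent M b (\<lambda>\<omega>. ((X \<omega>, Y \<omega>), Z \<omega>)) = ent M b (\<lambda>\<omega>. (X \<omega>, Y \<omega>, Z \<omega>))"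
    by (rule ent_eq_determines) (use X Y Z in \<open>auto simp: determines_def\<close>)
  then show ?thesis
    using ent_submodular[OF X Y Z] cent_eq_ent[OF X Z] cent_eq_ent[OF Y Z]
      cent_eq_ent[OF simple_function_Pair[OF X Y] Z] by simp
qed

lemma cent_Pair_eq_0:
  assumes "simple_function M X" "simple_function M Y" "simple_function M Z"
    and "cent M b X Z = 0" "cent M b Y Z = 0"
  shows "cent M b (\<lambda>\<omega>. (X \<omega>, Y \<omega>)) Z = 0"
  using cent_Pair_le[OF assms(1-3)] cent_nonneg[of "\<lambda>\<omega>. (X \<omega>, Y \<omega>)" Z] assms by simp

lemma cent_map_le_sum_list:
  assumes X: "\<And>n. simple_function M (X n)" and Z: "simple_function M Z"
  shows "cent M b (\<lambda>\<omega>. map (\<lambda>n. X n \<omega>) ns) Z \<le> (\<Sum>n\<leftarrow>ns. cent M b (X n) Z)"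
proof (induction ns)
  case Nil
  show ?case by (simp add: cent_eq_0_determines Z determines_def)
next
  case (Cons n ns)
  let ?Xs = "\<lambda>\<omega>. map (\<lambda>n. X n \<omega>) ns"
  have Xs: "simple_function M ?Xs" and Xs': "simple_function M (\<lambda>\<omega>. map (\<lambda>n. X n \<omega>) (n # ns))"
    by (rule simple_function_map[OF X])+
  have "cent M b (\<lambda>\<omega>. map (\<lambda>n. X n \<omega>) (n # ns)) Z = cent M b (\<lambda>\<omega>. (X n \<omega>, ?Xs \<omega>)) Z"
  proof -
    have "ent M b (\<lambda>\<omega>. (map (\<lambda>n. X n \<omega>) (n # ns), Z \<omega>)) = ent M b (\<lambda>\<omega>. ((X n \<omega>, ?Xs \<omega>), Z \<omega>))"
      by (rule ent_eq_determines) (use X Xs Z Xs' in \<open>auto simp: determines_def\<close>)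
    then show ?thesis
      using cent_eq_ent[OF Xs' Z] cent_eq_ent[OF simple_function_Pair[OF X Xs] Z]
      by simp
  qed
  also have "\<dots> \<le> cent M b (X n) Z + cent M b ?Xs Z"
    by (rule cent_Pair_le[OF X Xs Z])
  finally show ?case using Cons.IH by simp
qed

lemma cent_map_eq_0:
  assumes "\<And>n. simple_function M (X n)" "simple_function M Z"
    and "\<And>n. n \<in> set ns \<Longrightarrow> cent M b (X n) Z = 0"
  shows "cent M b (\<lambda>\<omega>. map (\<lambda>n. X n \<omega>) ns) Z = 0"
proof -
  have "(\<Sum>n\<leftarrow>ns. cent M b (X n) Z) = 0" using assms(3) by (induction ns) auto
  then show ?thesis
    using cent_map_le_sum_list[where X = X and Z = Z and ns = ns, OF assms(1,2)]
      cent_nonneg[OF simple_function_map[where X = X and ns = ns, OF assms(1)] assms(2)]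
    by simp
qed

lemma mi_eq_0_determines:
  assumes X: "simple_function M X" and G: "simple_function M G" and G': "simple_function M G'"
    and indep: "mi M b X G = 0" and det: "cent M b G' G = 0"
  shows "mi M b X G' = 0"
proof (rule antisym)
  have "ent M b (\<lambda>\<omega>. (X \<omega>, G \<omega>)) \<le> ent M b (\<lambda>\<omega>. (X \<omega>, G \<omega>, G' \<omega>))"
    by (rule ent_le_determines) (use X G G' in \<open>auto simp: determines_def\<close>)
  moreover have "ent M b (\<lambda>\<omega>. (X \<omega>, G \<omega>, G' \<omega>)) + ent M b G'
      \<le> ent M b (\<lambda>\<omega>. (X \<omega>, G' \<omega>)) + ent M b (\<lambda>\<omega>. (G \<omega>, G' \<omega>))"
    by (rule ent_submodular[OF X G G'])
  moreover have "ent M b (\<lambda>\<omega>. (G \<omega>, G' \<omega>)) = ent M b G"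
    using det cent_eq_ent[OF G' G] ent_commute[OF G G'] by simp
  ultimately show "mi M b X G' \<le> 0"
    using indep mi_eq_ent[OF X G] mi_eq_ent[OF X G'] by simp
qed (rule mutual_information_nonneg_simple[OF X G', folded mi_def])

lemma mi_eq_0_determines':
  assumes "simple_function M X" "simple_function M X'" "simple_function M G"
    and "mi M b X G = 0" "cent M b X' X = 0"
  shows "mi M b X' G = 0"
  using mi_eq_0_determines[OF assms(3,1,2)] assms(4,5) mi_commute assms(1-3) by metis

lemma cmi_cong_determines:
  assumes X: "simple_function M X" and Y: "simple_function M Y"
    and Z: "simple_function M Z" and Z': "simple_function M Z'"
    and "determines M Z Z'" "determines M Z' Z"
  shows "cmi M b X Y Z = cmi M b X Y Z'"
proof -
  have "ent M b (\<lambda>\<omega>. (X \<omega>, Z \<omega>)) = ent M b (\<lambda>\<omega>. (X \<omega>, Z' \<omega>))"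
    "ent M b (\<lambda>\<omega>. (Y \<omega>, Z \<omega>)) = ent M b (\<lambda>\<omega>. (Y \<omega>, Z' \<omega>))"
    "ent M b (\<lambda>\<omega>. (X \<omega>, Y \<omega>, Z \<omega>)) = ent M b (\<lambda>\<omega>. (X \<omega>, Y \<omega>, Z' \<omega>))"
    "ent M b Z = ent M b Z'"
    by (rule ent_eq_determines;
        use X Y Z Z' in \<open>auto simp: determines_def intro: determinesD[OF assms(5)] determinesD[OF assms(6)]\<close>)+
  then show ?thesis using cmi_eq_ent[OF X Y Z] cmi_eq_ent[OF X Y Z'] by simp
qed

lemma cmi_le_determines:
  assumes X: "simple_function M X" and Y: "simple_function M Y" and Z: "simple_function M Z"
    and det: "determines M Y Y'"
  shows "cmi M b X Y' Z \<le> cmi M b X Y Z"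
proof -
  have Y': "simple_function M Y'" using simple_function_determines[OF Y det] .
  have "ent M b (\<lambda>\<omega>. (X \<omega>, Y \<omega>, Y' \<omega>, Z \<omega>)) + ent M b (\<lambda>\<omega>. (Y' \<omega>, Z \<omega>))
      \<le> ent M b (\<lambda>\<omega>. (X \<omega>, Y' \<omega>, Z \<omega>)) + ent M b (\<lambda>\<omega>. (Y \<omega>, Y' \<omega>, Z \<omega>))"
    using ent_submodular[OF X Y simple_function_Pair[OF Y' Z]] by simp
  moreover have "ent M b (\<lambda>\<omega>. (X \<omega>, Y \<omega>, Y' \<omega>, Z \<omega>)) = ent M b (\<lambda>\<omega>. (X \<omega>, Y \<omega>, Z \<omega>))"
    "ent M b (\<lambda>\<omega>. (Y \<omega>, Y' \<omega>, Z \<omega>)) = ent M b (\<lambda>\<omega>. (Y \<omega>, Z \<omega>))"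
    by (rule ent_eq_determines;
        use X Y Y' Z in \<open>auto simp: determines_def intro: determinesD[OF det]\<close>)+
  ultimately show ?thesis
    using cmi_eq_ent[OF X Y Z] cmi_eq_ent[OF X Y' Z] by simp
qed

lemma ent_comp_same_distr:
  assumes V: "simple_function M V" and V': "simple_function M V'" and sd: "same_distr M V V'"
  shows "ent M b (\<lambda>\<omega>. f (V \<omega>)) = ent M b (\<lambda>\<omega>. f (V' \<omega>))"
proof -
  define S where "S = V`space M \<union> V'`space M"
  have S: "finite S"
    unfolding S_def using simple_functionD(1)[OF V] simple_functionD(1)[OF V'] by simp
  have VS: "V`space M \<subseteq> S" "V'`space M \<subseteq> S" unfolding S_def by auto
  have "prob (V -` {v} \<inter> space M) = prob (V' -` {v} \<inter> space M)" for v
  proof -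
    have "V -` {v} \<inter> space M = {\<omega> \<in> space M. V \<omega> = v}"
      "V' -` {v} \<inter> space M = {\<omega> \<in> space M. V' \<omega> = v}" by auto
    then show ?thesis using sd unfolding same_distr_def by simp
  qed
  then have fibers: "prob ((\<lambda>\<omega>. f (V \<omega>)) -` {u} \<inter> space M) = prob ((\<lambda>\<omega>. f (V' \<omega>)) -` {u} \<inter> space M)" for u
    using prob_vimage_comp[OF V S VS(1), of f u] prob_vimage_comp[OF V' S VS(2), of f u] by auto
  have "ent M b (\<lambda>\<omega>. f (V \<omega>)) = - (\<Sum>u\<in>f`S.
      prob ((\<lambda>\<omega>. f (V \<omega>)) -` {u} \<inter> space M) * log b (prob ((\<lambda>\<omega>. f (V \<omega>)) -` {u} \<inter> space M)))"
    by (rule ent_eq_sum_superset[OF simple_function_compose1[OF V]]) (use S VS in auto)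
  moreover have "ent M b (\<lambda>\<omega>. f (V' \<omega>)) = - (\<Sum>u\<in>f`S.
      prob ((\<lambda>\<omega>. f (V' \<omega>)) -` {u} \<inter> space M) * log b (prob ((\<lambda>\<omega>. f (V' \<omega>)) -` {u} \<inter> space M)))"
    by (rule ent_eq_sum_superset[OF simple_function_compose1[OF V']]) (use S VS in auto)
  ultimately show ?thesis by (simp add: fibers)
qed

lemma cmi_same_distr:
  assumes V: "simple_function M V" and V': "simple_function M V'" and sd: "same_distr M V V'"
    and "\<And>\<omega>. \<omega> \<in> space M \<Longrightarrow> X \<omega> = f (V \<omega>) \<and> Y \<omega> = g (V \<omega>) \<and> Z \<omega> = h (V \<omega>)"
    and "\<And>\<omega>. \<omega> \<in> space M \<Longrightarrow> X' \<omega> = f (V' \<omega>) \<and> Y' \<omega> = g (V' \<omega>) \<and> Z' \<omega> = h (V' \<omega>)"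
  shows "cmi M b X Y Z = cmi M b X' Y' Z'"
proof -
  have "ent M b (\<lambda>\<omega>. k (X \<omega>, Y \<omega>, Z \<omega>)) = ent M b (\<lambda>\<omega>. k (X' \<omega>, Y' \<omega>, Z' \<omega>))" for k
  proof -
    have "ent M b (\<lambda>\<omega>. k (X \<omega>, Y \<omega>, Z \<omega>)) = ent M b (\<lambda>\<omega>. k (f (V \<omega>), g (V \<omega>), h (V \<omega>)))"
      using assms(4) by (intro ent_cong) auto
    also have "\<dots> = ent M b (\<lambda>\<omega>. k (f (V' \<omega>), g (V' \<omega>), h (V' \<omega>)))"
      by (rule ent_comp_same_distr[OF V V' sd])
    also have "\<dots> = ent M b (\<lambda>\<omega>. k (X' \<omega>, Y' \<omega>, Z' \<omega>))"
      using assms(5) by (intro ent_cong) auto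
    finally show ?thesis .
  qed
  from this[of "\<lambda>(x, y, z). (x, z)"] this[of "\<lambda>(x, y, z). (y, z)"] this[of id]
    this[of "\<lambda>(x, y, z). z"]
  have "ent M b (\<lambda>\<omega>. (X \<omega>, Z \<omega>)) = ent M b (\<lambda>\<omega>. (X' \<omega>, Z' \<omega>))"
    "ent M b (\<lambda>\<omega>. (Y \<omega>, Z \<omega>)) = ent M b (\<lambda>\<omega>. (Y' \<omega>, Z' \<omega>))"
    "ent M b (\<lambda>\<omega>. (X \<omega>, Y \<omega>, Z \<omega>)) = ent M b (\<lambda>\<omega>. (X' \<omega>, Y' \<omega>, Z' \<omega>))"
    "ent M b Z = ent M b Z'"
    by simp_all
  moreover have X: "simple_function M X" and Y: "simple_function M Y" and Z: "simple_function M Z"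
    and X': "simple_function M X'" and Y': "simple_function M Y'" and Z': "simple_function M Z'"
    using simple_function_compose1[OF V] simple_function_compose1[OF V'] assms(4,5)
    by (auto cong: simple_function_cong)
  ultimately show ?thesis using cmi_eq_ent[OF X Y Z] cmi_eq_ent[OF X' Y' Z'] by simp
qed

lemma prob_vimage_compl_eq_0:
  assumes V: "simple_function M V" and S: "finite S" "S \<noteq> {}"
    and unif: "\<And>s. s \<in> S \<Longrightarrow> prob (V -` {s} \<inter> space M) = 1 / card S"
  shows "prob (V -` (- S) \<inter> space M) = 0"
proof -
  have "prob (V -` S \<inter> space M) = prob (\<Union>s\<in>S. V -` {s} \<inter> space M)"
    by (rule arg_cong[where f = prob]) auto
  also have "\<dots> = (\<Sum>s\<in>S. prob (V -` {s} \<inter> space M))"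
    by (rule measure_finite_Union)
      (use S simple_functionD(2)[OF V] in \<open>auto simp: disjoint_family_on_def\<close>)
  also have "\<dots> = 1" using S by (simp add: unif)
  finally have "prob (V -` S \<inter> space M) = 1" .
  moreover have "V -` (- S) \<inter> space M = space M - (V -` S \<inter> space M)" by auto
  ultimately show ?thesis using prob_compl[OF simple_functionD(2)[OF V]] by simp
qed

lemma ent_le_log_card:
  assumes V: "simple_function M V" and S: "finite S"
    and null: "prob (V -` (- S) \<inter> space M) = 0"
  shows "ent M b V \<le> log b (card S)"
proof -
  let ?supp = "V`space M \<inter> {v. prob (V -` {v} \<inter> space M) \<noteq> 0}"
  have "ent M b V \<le> log b (card ?supp)"
    unfolding ent_def by (rule entropy_le_card_not_0[OF simple_distributedI[OF V measure_nonneg refl]])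
  moreover have "?supp \<subseteq> S"
  proof
    fix v assume v: "v \<in> ?supp"
    show "v \<in> S"
    proof (rule ccontr)
      assume "v \<notin> S"
      then have "prob (V -` {v} \<inter> space M) \<le> prob (V -` (- S) \<inter> space M)"
        by (intro finite_measure_mono simple_functionD(2)[OF V]) auto
      with v null measure_nonneg[of M "V -` {v} \<inter> space M"] show False by simp
    qed
  qed
  then have "card ?supp \<le> card S" by (rule card_mono[OF S])
  then have "log b (card ?supp) \<le> log b (card S)"
  proof (cases "card ?supp = 0")
    case True
    then have "log b (card ?supp) = 0" by (simp add: log_def)
    moreover have "0 \<le> log b (card S)"
      using b_gt_1 by (cases "card S = 0") (simp_all add: log_def)
    ultimately show ?thesis by simp
  next
    case False
    with \<open>card ?supp \<le> card S\<close> show ?thesis using b_gt_1 by (intro log_mono) auto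
  qed
  ultimately show ?thesis by linarith
qed

lemma ent_eq_log_card:
  assumes V: "simple_function M V" and S: "finite S" "S \<noteq> {}"
    and unif: "\<And>s. s \<in> S \<Longrightarrow> prob (V -` {s} \<inter> space M) = 1 / card S"
  shows "ent M b V = log b (card S)"
proof -
  have null: "prob (V -` {v} \<inter> space M) = 0" if "v \<notin> S" for v
  proof -
    have "prob (V -` {v} \<inter> space M) \<le> prob (V -` (- S) \<inter> space M)"
      using that by (intro finite_measure_mono simple_functionD(2)[OF V]) auto
    then show ?thesis
      using prob_vimage_compl_eq_0[OF V S unif] measure_nonneg[of M "V -` {v} \<inter> space M"] by simp
  qed
  have "ent M b V = - (\<Sum>s\<in>S. prob (V -` {s} \<inter> space M) * log b (prob (V -` {s} \<inter> space M)))"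
    by (rule ent_eq_sum_superset[OF V S(1)]) (simp add: null)
  also have "\<dots> = log b (card S)"
    using S by (simp add: unif log_divide)
  finally show ?thesis .
qed

section \<open>Information inequalities for private retrieval\<close>

lemma cmi_messages_strategy_eq_0:
  assumes Wl: "simple_function M Wl" and F: "simple_function M F" and R: "simple_function M R"
    and Q: "simple_function M Q" and A: "simple_function M A"
    and indep: "mi M b Wl (\<lambda>\<omega>. (F \<omega>, R \<omega>)) = 0"
    and queries: "cent M b Q F = 0"
    and answers: "cent M b A (\<lambda>\<omega>. (Q \<omega>, Wl \<omega>, R \<omega>)) = 0"
  shows "cmi M b Wl F (\<lambda>\<omega>. (A \<omega>, Q \<omega>, R \<omega>)) = 0"
proof (rule antisym)
  note simple = Wl F R Q A
  have "ent M b Wl + ent M b (\<lambda>\<omega>. (F \<omega>, R \<omega>)) = ent M b (\<lambda>\<omega>. (Wl \<omega>, F \<omega>, R \<omega>))"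
    using indep mi_eq_ent[of Wl "\<lambda>\<omega>. (F \<omega>, R \<omega>)"] simple by simp
  moreover have "ent M b (\<lambda>\<omega>. (Wl \<omega>, F \<omega>, R \<omega>)) \<le> ent M b (\<lambda>\<omega>. (Wl \<omega>, F \<omega>, A \<omega>, Q \<omega>, R \<omega>))"
    by (rule ent_le_determines) (use simple in \<open>auto simp: determines_def\<close>)
  moreover have "ent M b (\<lambda>\<omega>. (Wl \<omega>, A \<omega>, Q \<omega>, R \<omega>)) \<le> ent M b Wl + ent M b (\<lambda>\<omega>. (Q \<omega>, R \<omega>))"
  proof -
    have "ent M b (\<lambda>\<omega>. (Wl \<omega>, A \<omega>, Q \<omega>, R \<omega>)) = ent M b (\<lambda>\<omega>. (A \<omega>, Q \<omega>, Wl \<omega>, R \<omega>))"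
      "ent M b (\<lambda>\<omega>. (Q \<omega>, Wl \<omega>, R \<omega>)) = ent M b (\<lambda>\<omega>. (Wl \<omega>, Q \<omega>, R \<omega>))"
      by (rule ent_eq_determines; use simple in \<open>auto simp: determines_def\<close>)+
    then show ?thesis
      using answers cent_eq_ent[of A "\<lambda>\<omega>. (Q \<omega>, Wl \<omega>, R \<omega>)"]
        ent_subadditive[of Wl "\<lambda>\<omega>. (Q \<omega>, R \<omega>)"] simple by simp
  qed
  moreover have "ent M b (\<lambda>\<omega>. (F \<omega>, A \<omega>, Q \<omega>, R \<omega>)) + ent M b (\<lambda>\<omega>. (Q \<omega>, R \<omega>))
      \<le> ent M b (\<lambda>\<omega>. (A \<omega>, Q \<omega>, R \<omega>)) + ent M b (\<lambda>\<omega>. (F \<omega>, R \<omega>))"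
  proof -
    have "cent M b Q (\<lambda>\<omega>. (F \<omega>, R \<omega>)) = 0"
      by (rule cent_eq_0_mono[OF _ _ _ queries]) (use simple in \<open>auto simp: determines_def\<close>)
    then have "ent M b (\<lambda>\<omega>. (F \<omega>, Q \<omega>, R \<omega>)) = ent M b (\<lambda>\<omega>. (F \<omega>, R \<omega>))"
      using cent_eq_ent[of Q "\<lambda>\<omega>. (F \<omega>, R \<omega>)"] ent_eq_determines[of "\<lambda>\<omega>. (Q \<omega>, F \<omega>, R \<omega>)"
          "\<lambda>\<omega>. (F \<omega>, Q \<omega>, R \<omega>)"] simple by (auto simp: determines_def)
    moreover have "ent M b (\<lambda>\<omega>. (F \<omega>, A \<omega>, Q \<omega>, R \<omega>)) = ent M b (\<lambda>\<omega>. (A \<omega>, F \<omega>, Q \<omega>, R \<omega>))"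
      by (rule ent_eq_determines) (use simple in \<open>auto simp: determines_def\<close>)
    ultimately show ?thesis
      using ent_submodular[of A F "\<lambda>\<omega>. (Q \<omega>, R \<omega>)"] simple by simp
  qed
  ultimately show "cmi M b Wl F (\<lambda>\<omega>. (A \<omega>, Q \<omega>, R \<omega>)) \<le> 0"
    using cmi_eq_ent[of Wl F "\<lambda>\<omega>. (A \<omega>, Q \<omega>, R \<omega>)"] simple by simp
qed (rule cmi_nonneg; use Wl F R Q A in simp)

lemma cent_eq_0_cond_indep:
  assumes Wl: "simple_function M Wl" and F: "simple_function M F" and G: "simple_function M G"
    and indep: "cmi M b Wl F G = 0" and det: "determines M Wl X"
    and decoding: "cent M b X (\<lambda>\<omega>. (F \<omega>, G \<omega>)) = 0"
  shows "cent M b X G = 0"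
proof -
  have X: "simple_function M X" using simple_function_determines[OF Wl det] .
  note simple = Wl F G X
  have "ent M b (\<lambda>\<omega>. (Wl \<omega>, F \<omega>, X \<omega>, G \<omega>)) + ent M b (\<lambda>\<omega>. (X \<omega>, G \<omega>))
      \<le> ent M b (\<lambda>\<omega>. (Wl \<omega>, X \<omega>, G \<omega>)) + ent M b (\<lambda>\<omega>. (F \<omega>, X \<omega>, G \<omega>))"
    using ent_submodular[of Wl F "\<lambda>\<omega>. (X \<omega>, G \<omega>)"] simple by simp
  moreover have "ent M b (\<lambda>\<omega>. (Wl \<omega>, F \<omega>, X \<omega>, G \<omega>)) = ent M b (\<lambda>\<omega>. (Wl \<omega>, F \<omega>, G \<omega>))"
    "ent M b (\<lambda>\<omega>. (Wl \<omega>, X \<omega>, G \<omega>)) = ent M b (\<lambda>\<omega>. (Wl \<omega>, G \<omega>))"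
    by (rule ent_eq_determines; use simple in \<open>auto simp: determines_def intro: determinesD[OF det]\<close>)+
  moreover have "ent M b (\<lambda>\<omega>. (F \<omega>, X \<omega>, G \<omega>)) = ent M b (\<lambda>\<omega>. (F \<omega>, G \<omega>))"
  proof -
    have "ent M b (\<lambda>\<omega>. (F \<omega>, X \<omega>, G \<omega>)) = ent M b (\<lambda>\<omega>. (X \<omega>, F \<omega>, G \<omega>))"
      by (rule ent_eq_determines) (use simple in \<open>auto simp: determines_def\<close>)
    then show ?thesis using decoding cent_eq_ent[of X "\<lambda>\<omega>. (F \<omega>, G \<omega>)"] simple by simp
  qed
  ultimately have "ent M b (\<lambda>\<omega>. (X \<omega>, G \<omega>)) \<le> ent M b G"
    using indep cmi_eq_ent[OF Wl F G] by simp
  then show ?thesis using cent_eq_ent[OF X G] cent_nonneg[OF X G] by simp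
qed

lemma cmi_add_le_cent:
  assumes P: "simple_function M P" and X: "simple_function M X" and Y: "simple_function M Y"
    and Q: "simple_function M Q" and A: "simple_function M A" and R: "simple_function M R"
    and indep: "mi M b (\<lambda>\<omega>. (P \<omega>, X \<omega>, Y \<omega>)) (\<lambda>\<omega>. (Q \<omega>, R \<omega>)) = 0"
    and decoding: "cent M b X (\<lambda>\<omega>. (A \<omega>, Q \<omega>, R \<omega>)) = 0"
    and new: "ent M b P + l \<le> ent M b (\<lambda>\<omega>. (P \<omega>, X \<omega>))"
  shows "cmi M b Y (\<lambda>\<omega>. (Q \<omega>, A \<omega>, R \<omega>)) (\<lambda>\<omega>. (P \<omega>, X \<omega>)) + l
    \<le> cent M b A (\<lambda>\<omega>. (Q \<omega>, R \<omega>, P \<omega>))"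
proof -
  note simple = P X Y Q A R
  have "cmi M b Y (\<lambda>\<omega>. (Q \<omega>, A \<omega>, R \<omega>)) (\<lambda>\<omega>. (P \<omega>, X \<omega>))
      = ent M b (\<lambda>\<omega>. (Y \<omega>, P \<omega>, X \<omega>)) + ent M b (\<lambda>\<omega>. ((Q \<omega>, A \<omega>, R \<omega>), P \<omega>, X \<omega>))
        - ent M b (\<lambda>\<omega>. (Y \<omega>, (Q \<omega>, A \<omega>, R \<omega>), P \<omega>, X \<omega>)) - ent M b (\<lambda>\<omega>. (P \<omega>, X \<omega>))"
    using cmi_eq_ent[of Y "\<lambda>\<omega>. (Q \<omega>, A \<omega>, R \<omega>)" "\<lambda>\<omega>. (P \<omega>, X \<omega>)"] simple by simp
  moreover have "ent M b (\<lambda>\<omega>. (Y \<omega>, P \<omega>, X \<omega>)) = ent M b (\<lambda>\<omega>. (P \<omega>, X \<omega>, Y \<omega>))"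
    by (rule ent_eq_determines) (use simple in \<open>auto simp: determines_def\<close>)
  moreover have "ent M b (\<lambda>\<omega>. ((P \<omega>, X \<omega>, Y \<omega>), Q \<omega>, R \<omega>))
      \<le> ent M b (\<lambda>\<omega>. (Y \<omega>, (Q \<omega>, A \<omega>, R \<omega>), P \<omega>, X \<omega>))"
    by (rule ent_le_determines) (use simple in \<open>auto simp: determines_def\<close>)
  moreover have "ent M b (\<lambda>\<omega>. ((P \<omega>, X \<omega>, Y \<omega>), Q \<omega>, R \<omega>))
      = ent M b (\<lambda>\<omega>. (P \<omega>, X \<omega>, Y \<omega>)) + ent M b (\<lambda>\<omega>. (Q \<omega>, R \<omega>))"
    using indep mi_eq_ent[of "\<lambda>\<omega>. (P \<omega>, X \<omega>, Y \<omega>)" "\<lambda>\<omega>. (Q \<omega>, R \<omega>)"] simple by simp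
  moreover have "ent M b (\<lambda>\<omega>. (P \<omega>, X \<omega>, A \<omega>, Q \<omega>, R \<omega>)) + ent M b (\<lambda>\<omega>. (A \<omega>, Q \<omega>, R \<omega>))
      \<le> ent M b (\<lambda>\<omega>. (P \<omega>, A \<omega>, Q \<omega>, R \<omega>)) + ent M b (\<lambda>\<omega>. (X \<omega>, A \<omega>, Q \<omega>, R \<omega>))"
    using ent_submodular[of P X "\<lambda>\<omega>. (A \<omega>, Q \<omega>, R \<omega>)"] simple by simp
  moreover have "ent M b (\<lambda>\<omega>. (X \<omega>, A \<omega>, Q \<omega>, R \<omega>)) = ent M b (\<lambda>\<omega>. (A \<omega>, Q \<omega>, R \<omega>))"
    using decoding cent_eq_ent[of X "\<lambda>\<omega>. (A \<omega>, Q \<omega>, R \<omega>)"] simple by simp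
  moreover have "ent M b (\<lambda>\<omega>. ((Q \<omega>, A \<omega>, R \<omega>), P \<omega>, X \<omega>)) = ent M b (\<lambda>\<omega>. (P \<omega>, X \<omega>, A \<omega>, Q \<omega>, R \<omega>))"
    by (rule ent_eq_determines) (use simple in \<open>auto simp: determines_def\<close>)
  moreover have "ent M b (\<lambda>\<omega>. (P \<omega>, A \<omega>, Q \<omega>, R \<omega>)) = ent M b (\<lambda>\<omega>. (A \<omega>, Q \<omega>, R \<omega>, P \<omega>))"
    by (rule ent_eq_determines) (use simple in \<open>auto simp: determines_def\<close>)
  moreover have "ent M b (\<lambda>\<omega>. (Q \<omega>, R \<omega>, P \<omega>)) \<le> ent M b (\<lambda>\<omega>. (Q \<omega>, R \<omega>)) + ent M b P"
  proof -
    have "ent M b (\<lambda>\<omega>. (Q \<omega>, R \<omega>, P \<omega>)) = ent M b (\<lambda>\<omega>. ((Q \<omega>, R \<omega>), P \<omega>))"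
      by (rule ent_eq_determines) (use simple in \<open>auto simp: determines_def\<close>)
    then show ?thesis using ent_subadditive[of "\<lambda>\<omega>. (Q \<omega>, R \<omega>)" P] simple by simp
  qed
  moreover have "cent M b A (\<lambda>\<omega>. (Q \<omega>, R \<omega>, P \<omega>))
      = ent M b (\<lambda>\<omega>. (A \<omega>, Q \<omega>, R \<omega>, P \<omega>)) - ent M b (\<lambda>\<omega>. (Q \<omega>, R \<omega>, P \<omega>))"
    using cent_eq_ent[of A "\<lambda>\<omega>. (Q \<omega>, R \<omega>, P \<omega>)"] simple by simp
  ultimately show ?thesis using new by linarith
qed

lemma cent_le_cmi:
  assumes T: "simple_function M T" and P: "simple_function M P" and Q: "simple_function M Q"
    and A: "simple_function M A" and R: "simple_function M R"
    and answer: "cent M b A (\<lambda>\<omega>. (Q \<omega>, T \<omega>, P \<omega>, R \<omega>)) = 0"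
    and indep: "mi M b P (\<lambda>\<omega>. (Q \<omega>, R \<omega>)) = 0"
  shows "cent M b A (\<lambda>\<omega>. (Q \<omega>, R \<omega>, P \<omega>)) \<le> cmi M b T (\<lambda>\<omega>. (Q \<omega>, A \<omega>, R \<omega>)) P"
proof -
  note simple = T P Q A R
  have "cmi M b T (\<lambda>\<omega>. (Q \<omega>, A \<omega>, R \<omega>)) P = ent M b (\<lambda>\<omega>. (T \<omega>, P \<omega>))
      + ent M b (\<lambda>\<omega>. ((Q \<omega>, A \<omega>, R \<omega>), P \<omega>)) - ent M b (\<lambda>\<omega>. (T \<omega>, (Q \<omega>, A \<omega>, R \<omega>), P \<omega>)) - ent M b P"
    using cmi_eq_ent[of T "\<lambda>\<omega>. (Q \<omega>, A \<omega>, R \<omega>)" P] simple by simp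
  moreover have "ent M b (\<lambda>\<omega>. (T \<omega>, (Q \<omega>, A \<omega>, R \<omega>), P \<omega>)) = ent M b (\<lambda>\<omega>. (A \<omega>, Q \<omega>, T \<omega>, P \<omega>, R \<omega>))"
    by (rule ent_eq_determines) (use simple in \<open>auto simp: determines_def\<close>)
  moreover have "ent M b (\<lambda>\<omega>. (A \<omega>, Q \<omega>, T \<omega>, P \<omega>, R \<omega>)) = ent M b (\<lambda>\<omega>. (Q \<omega>, T \<omega>, P \<omega>, R \<omega>))"
    using answer cent_eq_ent[of A "\<lambda>\<omega>. (Q \<omega>, T \<omega>, P \<omega>, R \<omega>)"] simple by simp
  moreover have "ent M b (\<lambda>\<omega>. (Q \<omega>, T \<omega>, P \<omega>, R \<omega>)) \<le> ent M b (\<lambda>\<omega>. (T \<omega>, P \<omega>)) + ent M b (\<lambda>\<omega>. (Q \<omega>, R \<omega>))"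
  proof -
    have "ent M b (\<lambda>\<omega>. (Q \<omega>, T \<omega>, P \<omega>, R \<omega>)) = ent M b (\<lambda>\<omega>. ((T \<omega>, P \<omega>), Q \<omega>, R \<omega>))"
      by (rule ent_eq_determines) (use simple in \<open>auto simp: determines_def\<close>)
    then show ?thesis using ent_subadditive[of "\<lambda>\<omega>. (T \<omega>, P \<omega>)" "\<lambda>\<omega>. (Q \<omega>, R \<omega>)"] simple by simp
  qed
  moreover have "ent M b (\<lambda>\<omega>. (P \<omega>, Q \<omega>, R \<omega>)) = ent M b P + ent M b (\<lambda>\<omega>. (Q \<omega>, R \<omega>))"
    using indep mi_eq_ent[of P "\<lambda>\<omega>. (Q \<omega>, R \<omega>)"] simple by simp
  moreover have "ent M b (\<lambda>\<omega>. (Q \<omega>, R \<omega>, P \<omega>)) = ent M b (\<lambda>\<omega>. (P \<omega>, Q \<omega>, R \<omega>))"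
    by (rule ent_eq_determines) (use simple in \<open>auto simp: determines_def\<close>)
  moreover have "ent M b (\<lambda>\<omega>. ((Q \<omega>, A \<omega>, R \<omega>), P \<omega>)) = ent M b (\<lambda>\<omega>. (A \<omega>, Q \<omega>, R \<omega>, P \<omega>))"
    by (rule ent_eq_determines) (use simple in \<open>auto simp: determines_def\<close>)
  moreover have "cent M b A (\<lambda>\<omega>. (Q \<omega>, R \<omega>, P \<omega>))
      = ent M b (\<lambda>\<omega>. (A \<omega>, Q \<omega>, R \<omega>, P \<omega>)) - ent M b (\<lambda>\<omega>. (Q \<omega>, R \<omega>, P \<omega>))"
    using cent_eq_ent[of A "\<lambda>\<omega>. (Q \<omega>, R \<omega>, P \<omega>)"] simple by simp
  ultimately show ?thesis by linarith
qed

end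

section \<open>Valid schemes\<close>

lemma two_le_card_field: "2 \<le> CARD('f::{field,finite})"
proof -
  have "card {0::'f, 1} = 2" by simp
  moreover have "card {0::'f, 1} \<le> CARD('f)" by (rule card_mono) auto
  ultimately show ?thesis by simp
qed

locale spir_scheme =
  fixes M :: "'a measure" and N K L :: nat and C :: "'c set" and m :: nat
    and W :: "nat \<Rightarrow> 'a \<Rightarrow> 'f::{field,finite} list" and RS :: "'c \<Rightarrow> 'a \<Rightarrow> 'r"
    and F :: "'a \<Rightarrow> 'g" and Q :: "nat \<Rightarrow> nat \<Rightarrow> 'c set \<Rightarrow> 'a \<Rightarrow> 'q"
    and A :: "nat \<Rightarrow> nat \<Rightarrow> 'c set \<Rightarrow> 'a \<Rightarrow> 'ans" and b :: real
  assumes valid: "valid_scheme M N K L C m W RS F Q A"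
    and b_def: "b = real CARD('f)"
begin

lemma prob_space_M: "prob_space M"
  using valid by (simp add: valid_scheme_def Let_def)

lemma one_less_b: "1 < b"
  unfolding b_def using two_le_card_field[where 'f = 'f] by simp

sublocale information_space M b
  by (simp add: information_space_def information_space_axioms_def prob_space_M one_less_b)

lemma finite_C: "finite C"
  using valid by (simp add: valid_scheme_def Let_def)

lemma simple_function_W [simp]: "simple_function M (W j)"
  and simple_function_RS [simp]: "simple_function M (RS c)"
  and simple_function_F [simp]: "simple_function M F"
  and simple_function_Q [simp]: "simple_function M (Q n k U)"
  and simple_function_A [simp]: "simple_function M (A n k U)"
  using valid by (simp_all add: valid_scheme_def Let_def)

lemma simple_function_scheme [simp]:
  "simple_function M (Wseg W a c)"
  "simple_function M (allN Q N k U)"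
  "simple_function M (allN A N k U)"
  "U \<subseteq> C \<Longrightarrow> simple_function M (Rpart RS U)"
  by (auto intro!: simple_function_Wseg simple_function_allN simple_function_Rpart
      finite_subset[OF _ finite_C])

lemma adm_subset: "U \<in> adm C m \<Longrightarrow> U \<subseteq> C"
  by (simp add: adm_def)

lemma
  assumes "k \<in> {1..K}" "U \<in> adm C m"
  shows mi_messages_strategy: "mi M b (Wseg W 1 K) (\<lambda>\<omega>. (F \<omega>, Rpart RS C \<omega>, Rpart RS U \<omega>)) = 0"
    and cent_queries_strategy: "cent M b (allN Q N k U) F = 0"
    and cent_answer_query: "\<And>n. n \<in> {1..N} \<Longrightarrow>
      cent M b (A n k U) (\<lambda>\<omega>. (Q n k U \<omega>, Wseg W 1 K \<omega>, Rpart RS C \<omega>)) = 0"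
    and cent_message_strategy: "cent M b (W k) (\<lambda>\<omega>. (F \<omega>, allN A N k U \<omega>, Rpart RS U \<omega>)) = 0"
  using valid assms unfolding valid_scheme_def Let_def b_def by fast+

lemma messages_uniform:
  "ws \<in> message_lists L K \<Longrightarrow> measure M {\<omega> \<in> space M. Wseg W 1 K \<omega> = ws} = 1 / b ^ (K * L)"
  using valid unfolding valid_scheme_def Let_def b_def message_lists_def by blast

lemma prob_messages:
  assumes "ws \<in> message_lists L K"
  shows "prob (Wseg W 1 K -` {ws} \<inter> space M) = 1 / card (message_lists L K :: 'f list list set)"
proof -
  have "Wseg W 1 K -` {ws} \<inter> space M = {\<omega> \<in> space M. Wseg W 1 K \<omega> = ws}" by auto
  then show ?thesis
    using messages_uniform[OF assms] by (simp add: card_message_lists b_def mult.commute)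
qed

lemma log_card_message_lists: "log b (card (message_lists L j :: 'f list list set)) = real j * real L"
  using one_less_b by (simp add: card_message_lists b_def[symmetric] mult.commute)

lemma ent_messages: "ent M b (Wseg W 1 K) = real K * real L"
  using ent_eq_log_card[OF simple_function_scheme(1) finite_message_lists message_lists_ne prob_messages]
  by (simp only: log_card_message_lists)

lemma prob_messages_compl: "prob (Wseg W 1 K -` (- message_lists L K) \<inter> space M) = 0"
  by (rule prob_vimage_compl_eq_0[OF simple_function_scheme(1) finite_message_lists
        message_lists_ne prob_messages])

lemma ent_Wseg_le:
  assumes "1 \<le> a" "c \<le> K"
  shows "ent M b (Wseg W a c) \<le> real (Suc c - a) * real L"
proof -
  have "prob (Wseg W a c -` (- message_lists L (Suc c - a)) \<inter> space M)
      \<le> prob (Wseg W 1 K -` (- message_lists L K) \<inter> space M)"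
  proof (rule finite_measure_mono)
    show "Wseg W a c -` (- message_lists L (Suc c - a)) \<inter> space M
        \<subseteq> Wseg W 1 K -` (- message_lists L K) \<inter> space M"
      using Wseg_in_message_lists[where W = W and L = L, OF _ assms] by blast
  qed (simp add: simple_functionD(2))
  then have "prob (Wseg W a c -` (- message_lists L (Suc c - a)) \<inter> space M) = 0"
    using prob_messages_compl
      measure_nonneg[of M "Wseg W a c -` (- message_lists L (Suc c - a)) \<inter> space M"]
    by linarith
  from ent_le_log_card[OF simple_function_scheme(1) finite_message_lists this]
  show ?thesis by (simp only: log_card_message_lists)
qed

lemma ent_Wseg_prefix:
  assumes "j \<le> K"
  shows "ent M b (Wseg W 1 j) = real j * real L"
proof (rule antisym)
  show "ent M b (Wseg W 1 j) \<le> real j * real L"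
    using ent_Wseg_le[of 1 j] assms by simp
  have split: "Wseg W 1 K \<omega> = Wseg W 1 j \<omega> @ Wseg W (Suc j) K \<omega>" for \<omega>
    using Wseg_append[of 1 "Suc j" K] assms by simp
  have "ent M b (Wseg W 1 K) = ent M b (\<lambda>\<omega>. (Wseg W 1 j \<omega>, Wseg W (Suc j) K \<omega>))"
    by (rule ent_eq_determines) (use split in \<open>auto simp: determines_def\<close>)
  also have "\<dots> \<le> ent M b (Wseg W 1 j) + ent M b (Wseg W (Suc j) K)"
    by (rule ent_subadditive) simp_all
  finally have "ent M b (Wseg W 1 K) \<le> ent M b (Wseg W 1 j) + ent M b (Wseg W (Suc j) K)" .
  moreover have "ent M b (Wseg W (Suc j) K) \<le> real K * real L - real j * real L"
    using ent_Wseg_le[of "Suc j" K] assms by (simp add: of_nat_diff left_diff_distrib)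
  ultimately show "real j * real L \<le> ent M b (Wseg W 1 j)"
    using ent_messages by linarith
qed

lemma mi_messages_queries:
  assumes "k \<in> {1..K}" "U \<in> adm C m"
  shows "mi M b (Wseg W 1 K) (\<lambda>\<omega>. (allN Q N k U \<omega>, Rpart RS C \<omega>)) = 0"
proof (rule mi_eq_0_determines[OF _ _ _ mi_messages_strategy[OF assms]])
  let ?G = "\<lambda>\<omega>. (F \<omega>, Rpart RS C \<omega>, Rpart RS U \<omega>)"
  have U: "U \<subseteq> C" using adm_subset[OF assms(2)] .
  have "cent M b (allN Q N k U) ?G = 0"
    by (rule cent_eq_0_mono[OF _ _ _ cent_queries_strategy[OF assms]]) (auto simp: U determines_def)
  moreover have "cent M b (Rpart RS C) ?G = 0"
    by (rule cent_eq_0_determines) (auto simp: U determines_def)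
  ultimately show "cent M b (\<lambda>\<omega>. (allN Q N k U \<omega>, Rpart RS C \<omega>)) ?G = 0"
    by (intro cent_Pair_eq_0) (auto simp: U)
qed (auto simp: adm_subset[OF assms(2)])

lemma cent_answers_queries:
  assumes "k \<in> {1..K}" "U \<in> adm C m"
  shows "cent M b (allN A N k U) (\<lambda>\<omega>. (allN Q N k U \<omega>, Wseg W 1 K \<omega>, Rpart RS C \<omega>)) = 0"
proof -
  let ?G = "\<lambda>\<omega>. (allN Q N k U \<omega>, Wseg W 1 K \<omega>, Rpart RS C \<omega>)"
  have "cent M b (A n k U) ?G = 0" if n: "n \<in> {1..N}" for n
    by (rule cent_eq_0_mono[OF _ _ _ cent_answer_query[OF assms n]])
      (auto simp: determines_def nth_allN[OF n, symmetric])
  then show ?thesis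
    unfolding allN_eq_map[of A] by (intro cent_map_eq_0) auto
qed

lemma cent_message_answers_queries:
  assumes k: "k \<in> {1..K}" and U: "U \<in> adm C m"
  shows "cent M b (W k) (\<lambda>\<omega>. (allN A N k U \<omega>, allN Q N k U \<omega>, Rpart RS C \<omega>)) = 0"
proof (rule cent_eq_0_cond_indep[where Wl = "Wseg W 1 K" and F = F])
  have UC: "U \<subseteq> C" using adm_subset[OF U] .
  have "mi M b (Wseg W 1 K) (\<lambda>\<omega>. (F \<omega>, Rpart RS C \<omega>)) = 0"
    by (rule mi_eq_0_determines[OF _ _ _ mi_messages_strategy[OF k U] cent_eq_0_determines])
      (auto simp: UC determines_def)
  then show "cmi M b (Wseg W 1 K) F (\<lambda>\<omega>. (allN A N k U \<omega>, allN Q N k U \<omega>, Rpart RS C \<omega>)) = 0"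
    using cent_queries_strategy[OF k U] cent_answers_queries[OF k U]
    by (intro cmi_messages_strategy_eq_0) simp_all
  show "cent M b (W k) (\<lambda>\<omega>. (F \<omega>, allN A N k U \<omega>, allN Q N k U \<omega>, Rpart RS C \<omega>)) = 0"
    by (rule cent_eq_0_mono[OF _ _ _ cent_message_strategy[OF k U]])
      (auto simp: UC determines_def Rpart_subset[OF UC])
  have "W k \<omega> = Wseg W 1 K \<omega> ! (k - 1)" for \<omega>
    using k by (simp add: nth_Wseg)
  then show "determines M (Wseg W 1 K) (W k)"
    unfolding determines_def by metis
qed simp_all

lemma cmi_add_le_cent_answers:
  assumes k: "k \<in> {1..K}" and U: "U \<in> adm C m"
  shows "cmi M b (Wseg W (k + 1) K) (\<lambda>\<omega>. (allN Q N k U \<omega>, allN A N k U \<omega>, Rpart RS C \<omega>)) (Wseg W 1 k)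
      + real L \<le> cent M b (allN A N k U) (\<lambda>\<omega>. (allN Q N k U \<omega>, Rpart RS C \<omega>, Wseg W 1 (k - 1) \<omega>))"
proof -
  let ?P = "Wseg W 1 (k - 1)" and ?Y = "Wseg W (k + 1) K"
  have UC: "U \<subseteq> C" using adm_subset[OF U] .
  have split: "Wseg W 1 K \<omega> = ?P \<omega> @ W k \<omega> # ?Y \<omega>" "Wseg W 1 k \<omega> = ?P \<omega> @ [W k \<omega>]" for \<omega>
    using k Wseg_append[of 1 k K W \<omega>] Wseg_Cons[of k K W \<omega>] Wseg_append[of 1 k k W \<omega>]
    by (simp_all add: Wseg_def)
  have "cmi M b ?Y (\<lambda>\<omega>. (allN Q N k U \<omega>, allN A N k U \<omega>, Rpart RS C \<omega>)) (Wseg W 1 k)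
      = cmi M b ?Y (\<lambda>\<omega>. (allN Q N k U \<omega>, allN A N k U \<omega>, Rpart RS C \<omega>)) (\<lambda>\<omega>. (?P \<omega>, W k \<omega>))"
    by (rule cmi_cong_determines) (use split in \<open>auto simp: UC determines_def\<close>)
  moreover have "\<dots> + real L \<le> cent M b (allN A N k U) (\<lambda>\<omega>. (allN Q N k U \<omega>, Rpart RS C \<omega>, ?P \<omega>))"
  proof (rule cmi_add_le_cent)
    show "mi M b (\<lambda>\<omega>. (?P \<omega>, W k \<omega>, ?Y \<omega>)) (\<lambda>\<omega>. (allN Q N k U \<omega>, Rpart RS C \<omega>)) = 0"
      by (rule mi_eq_0_determines'[OF _ _ _ mi_messages_queries[OF k U] cent_eq_0_determines])
        (use split in \<open>auto simp: determines_def\<close>)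
    show "cent M b (W k) (\<lambda>\<omega>. (allN A N k U \<omega>, allN Q N k U \<omega>, Rpart RS C \<omega>)) = 0"
      by (rule cent_message_answers_queries[OF k U])
    have "ent M b (\<lambda>\<omega>. (?P \<omega>, W k \<omega>)) = ent M b (Wseg W 1 k)"
      by (rule ent_eq_determines) (use split in \<open>auto simp: determines_def\<close>)
    moreover have "ent M b ?P = real (k - 1) * real L"
      by (rule ent_Wseg_prefix) (use k in auto)
    moreover have "ent M b (Wseg W 1 k) = real k * real L"
      by (rule ent_Wseg_prefix) (use k in simp)
    moreover have "real (k - 1) * real L + real L = real k * real L"
      using k by (simp add: of_nat_diff algebra_simps)
    ultimately show "ent M b ?P + real L \<le> ent M b (\<lambda>\<omega>. (?P \<omega>, W k \<omega>))" by linarith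
  qed (auto simp: UC)
  ultimately show ?thesis by simp
qed

lemma cent_answers_le_sum_cmi:
  assumes k: "k \<in> {1..K}" and U: "U \<in> adm C m"
  shows "cent M b (allN A N k U) (\<lambda>\<omega>. (allN Q N k U \<omega>, Rpart RS C \<omega>, Wseg W 1 (k - 1) \<omega>))
    \<le> (\<Sum>n\<in>{1..N}. cmi M b (Wseg W k K) (\<lambda>\<omega>. (Q n k U \<omega>, A n k U \<omega>, Rpart RS C \<omega>)) (Wseg W 1 (k - 1)))"
proof -
  let ?P = "Wseg W 1 (k - 1)" and ?T = "Wseg W k K" and ?R = "Rpart RS C"
  let ?G = "\<lambda>\<omega>. (allN Q N k U \<omega>, ?R \<omega>, ?P \<omega>)"
  have split: "Wseg W 1 K \<omega> = ?P \<omega> @ ?T \<omega>" for \<omega>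
    using k Wseg_append[of 1 k K W \<omega>] by simp
  have database: "cent M b (A n k U) ?G \<le> cmi M b ?T (\<lambda>\<omega>. (Q n k U \<omega>, A n k U \<omega>, ?R \<omega>)) ?P"
    if n: "n \<in> {1..N}" for n
  proof -
    have "cent M b (A n k U) ?G \<le> cent M b (A n k U) (\<lambda>\<omega>. (Q n k U \<omega>, ?R \<omega>, ?P \<omega>))"
      by (rule cent_le_determines) (auto simp: determines_def nth_allN[OF n, symmetric])
    also have "\<dots> \<le> cmi M b ?T (\<lambda>\<omega>. (Q n k U \<omega>, A n k U \<omega>, ?R \<omega>)) ?P"
    proof (rule cent_le_cmi)
      show "cent M b (A n k U) (\<lambda>\<omega>. (Q n k U \<omega>, ?T \<omega>, ?P \<omega>, ?R \<omega>)) = 0"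
        by (rule cent_eq_0_mono[OF _ _ _ cent_answer_query[OF k U n]])
          (use split in \<open>auto simp: determines_def\<close>)
      have "determines M (\<lambda>\<omega>. (allN Q N k U \<omega>, ?R \<omega>)) (\<lambda>\<omega>. (Q n k U \<omega>, ?R \<omega>))"
        by (auto simp: determines_def nth_allN[OF n, symmetric])
      then have indep: "mi M b (Wseg W 1 K) (\<lambda>\<omega>. (Q n k U \<omega>, ?R \<omega>)) = 0"
        by (intro mi_eq_0_determines[OF _ _ _ mi_messages_queries[OF k U] cent_eq_0_determines]) simp_all
      show "mi M b ?P (\<lambda>\<omega>. (Q n k U \<omega>, ?R \<omega>)) = 0"
        by (rule mi_eq_0_determines'[OF _ _ _ indep cent_eq_0_determines])
          (use split in \<open>auto simp: determines_def append_eq_append_conv\<close>)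
    qed simp_all
    finally show ?thesis .
  qed
  have "cent M b (allN A N k U) ?G \<le> (\<Sum>n\<leftarrow>[1..<Suc N]. cent M b (A n k U) ?G)"
    unfolding allN_eq_map[of A] by (rule cent_map_le_sum_list) simp_all
  also have "\<dots> = (\<Sum>n\<in>{1..N}. cent M b (A n k U) ?G)"
    by (simp add: sum_list_distinct_conv_sum_set atLeastLessThanSuc_atLeastAtMost del: upt_Suc)
  also have "\<dots> \<le> (\<Sum>n\<in>{1..N}. cmi M b ?T (\<lambda>\<omega>. (Q n k U \<omega>, A n k U \<omega>, ?R \<omega>)) ?P)"
    by (rule sum_mono) (rule database)
  finally show ?thesis .
qed

(* The only place where user privacy is used. *)
lemma cmi_database_le_cmi_all:
  assumes n: "n \<in> {1..N}" and j: "j \<in> {1..K}"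
    and same: "same_distr M (\<lambda>\<omega>. (Q n k' U \<omega>, A n k' U \<omega>, Wseg W 1 K \<omega>, Rpart RS C \<omega>))
                            (\<lambda>\<omega>. (Q n k U' \<omega>, A n k U' \<omega>, Wseg W 1 K \<omega>, Rpart RS C \<omega>))"
  shows "cmi M b (Wseg W j K) (\<lambda>\<omega>. (Q n k U' \<omega>, A n k U' \<omega>, Rpart RS C \<omega>)) (Wseg W 1 (j - 1))
    \<le> cmi M b (Wseg W j K) (\<lambda>\<omega>. (allN Q N k' U \<omega>, allN A N k' U \<omega>, Rpart RS C \<omega>)) (Wseg W 1 (j - 1))"
proof -
  have segments: "Wseg W j K \<omega> = drop (j - 1) (Wseg W 1 K \<omega>)"
    "Wseg W 1 (j - 1) \<omega> = take (j - 1) (Wseg W 1 K \<omega>)" for \<omega>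
    using j Wseg_append[of 1 j K W \<omega>] by simp_all
  have "cmi M b (Wseg W j K) (\<lambda>\<omega>. (Q n k U' \<omega>, A n k U' \<omega>, Rpart RS C \<omega>)) (Wseg W 1 (j - 1))
      = cmi M b (Wseg W j K) (\<lambda>\<omega>. (Q n k' U \<omega>, A n k' U \<omega>, Rpart RS C \<omega>)) (Wseg W 1 (j - 1))"
    by (rule sym, rule cmi_same_distr[OF _ _ same, where f = "\<lambda>(q, a, w, r). drop (j - 1) w"
          and g = "\<lambda>(q, a, w, r). (q, a, r)" and h = "\<lambda>(q, a, w, r). take (j - 1) w"])
      (use segments in simp_all)
  also have "\<dots> \<le> cmi M b (Wseg W j K) (\<lambda>\<omega>. (allN Q N k' U \<omega>, allN A N k' U \<omega>, Rpart RS C \<omega>))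
      (Wseg W 1 (j - 1))"
    by (rule cmi_le_determines) (auto simp: determines_def nth_allN[OF n, symmetric])
  finally show ?thesis .
qed

end

theorem lemma2:
  fixes M :: "'a measure" and N K L m :: nat and C :: "'c set"
    and W :: "nat \<Rightarrow> 'a \<Rightarrow> 'f::{field,finite} list" and RS :: "'c \<Rightarrow> 'a \<Rightarrow> 'r"
    and F :: "'a \<Rightarrow> 'g" and Q :: "nat \<Rightarrow> nat \<Rightarrow> 'c set \<Rightarrow> 'a \<Rightarrow> 'q"
    and A :: "nat \<Rightarrow> nat \<Rightarrow> 'c set \<Rightarrow> 'a \<Rightarrow> 'ans"
    and k :: nat and U U' :: "'c set"
  assumes valid: "valid_scheme M N K L C m W RS F Q A"
    and N: "N \<ge> 1" and K: "K \<ge> 2" and k: "k \<in> {2..K}"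
    and U: "U \<in> adm C m"
    and U': "U' \<in> adm C m"
    and U'_ent: "ent M (real CARD('f)) (Rpart RS U') = ent M (real CARD('f)) (Rpart RS U)"
    and U'_priv: "\<forall>n\<in>{1..N}.
        same_distr M (\<lambda>\<omega>. (Q n (k - 1) U \<omega>, A n (k - 1) U \<omega>, Wseg W 1 K \<omega>, Rpart RS C \<omega>))
                     (\<lambda>\<omega>. (Q n k U' \<omega>, A n k U' \<omega>, Wseg W 1 K \<omega>, Rpart RS C \<omega>))"
  shows "cmi M (real CARD('f)) (Wseg W k K)
            (\<lambda>\<omega>. (allN Q N (k - 1) U \<omega>, allN A N (k - 1) U \<omega>, Rpart RS C \<omega>)) (Wseg W 1 (k - 1))
         \<ge> 1 / real N * cmi M (real CARD('f)) (Wseg W (k + 1) K)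
               (\<lambda>\<omega>. (allN Q N k U' \<omega>, allN A N k U' \<omega>, Rpart RS C \<omega>)) (Wseg W 1 k)
           + real L / real N"
proof -
  interpret spir_scheme M N K L C m W RS F Q A "real CARD('f)"
    by (rule spir_scheme.intro) (rule valid, rule refl)
  let ?b = "real CARD('f)" and ?T = "Wseg W k K" and ?P = "Wseg W 1 (k - 1)" and ?R = "Rpart RS C"
  let ?all = "cmi M ?b ?T (\<lambda>\<omega>. (allN Q N (k - 1) U \<omega>, allN A N (k - 1) U \<omega>, ?R \<omega>)) ?P"
  have k1: "k \<in> {1..K}" using k by simp
  have "cmi M ?b (Wseg W (k + 1) K) (\<lambda>\<omega>. (allN Q N k U' \<omega>, allN A N k U' \<omega>, ?R \<omega>)) (Wseg W 1 k) + real L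
      \<le> cent M ?b (allN A N k U') (\<lambda>\<omega>. (allN Q N k U' \<omega>, ?R \<omega>, ?P \<omega>))"
    by (rule cmi_add_le_cent_answers[OF k1 U'])
  also have "\<dots> \<le> (\<Sum>n\<in>{1..N}. cmi M ?b ?T (\<lambda>\<omega>. (Q n k U' \<omega>, A n k U' \<omega>, ?R \<omega>)) ?P)"
    by (rule cent_answers_le_sum_cmi[OF k1 U'])
  also have "\<dots> \<le> (\<Sum>n\<in>{1..N}. ?all)"
    by (rule sum_mono) (use cmi_database_le_cmi_all[OF _ k1] U'_priv in blast)
  also have "\<dots> = real N * ?all" by simp
  finally show ?thesis
    using N by (simp add: field_simps)
qed

end
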